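(* Let $\mathbf{x}:[-1,1]^2\to\mathbb{R}^2$, $\mathbf{x}(\xi,\eta)=(x(\xi,\eta),y(\xi,\eta))$, be a $C^1$ map whose Jacobian $\mathbf{J}=\begin{bmatrix} x_\xi & x_\eta\\ y_\xi & y_\eta\end{bmatrix}$ is nonsingular on the edge $\{\xi=1\}$ (including the corners $(1,\pm1)$). Let $F(-1,\cdot)$, $F(\cdot,-1)$, $F(\cdot,1)$ be given differentiable functions on $[-1,1]$ (transformed Dirichlet data on the edges $\xi=-1$, $\eta=-1$, $\eta=1$), agreeing at the corners $(-1,\pm1)$; let $\alpha_{BC}$ be a constant and $u_{rBC}$ a given function on the image of the edge $\xi=1$ (Robin data). Define $S_{BC},W_{BC},T_{rBC},\lambda_B,\lambda_C,F^a_\eta(1,\pm1)$, the polynomials $\varphi_0,\varphi_1,\psi_0,\psi_1$ and the operators $Pg$, $F^g_\xi(1,\eta)$, $PF^g$ as in the context. Assume: if $\lambda_B=0$ then $F_\xi(1,-1)+\alpha_{BC}W_{BC}(-1)F(1,-1)-T_{rBC}(-1)=0$, and if $\lambda_C=0$ then $F_\xi(1,1)+\alpha_{BC}W_{BC}(1)F(1,1)-T_{rBC}(1)=0$. Then for every sufficiently differentiable $g:[-1,1]^2\to\mathbb{R}$, the function $V=g-Pg+PF^g$ satisfies, for all $\xi,\eta\in[-1,1]$, $V(\xi,-1)=F(\xi,-1)$, $V(\xi,1)=F(\xi,1)$, $V(-1,\eta)=F(-1,\eta)$, and $$V_\xi(1,\eta)+S_{BC}(\eta)V_\eta(1,\e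ta)+\alpha_{BC}W_{BC}(\eta)V(1,\eta)=T_{rBC}(\eta).$$
   Context: Setting: a curved quadrilateral $ABCD$ is the image of $[-1,1]^2$ under $\mathbf{x}$, with $A=\mathbf{x}(-1,-1)$, $B=\mathbf{x}(1,-1)$, $C=\mathbf{x}(1,1)$, $D=\mathbf{x}(-1,1)$; edges $AB:\eta=-1$, $BC:\xi=1$, $CD:\eta=1$, $AD:\xi=-1$. A field $u$ is represented as $V(\xi,\eta)=u(\mathbf{x}(\xi,\eta))$; the Robin condition $\mathbf n\cdot\nabla u+\alpha_{BC}u=u_{rBC}$ on $BC$ becomes the displayed condition on $V$. Notation: $F(1,-1):=F(\xi,-1)|_{\xi=1}$, $F(1,1):=F(\xi,1)|_{\xi=1}$, $F_\xi(1,\pm1):=\frac{d}{d\xi}F(\xi,\pm1)|_{\xi=1}$. Definitions: $K_{xBC}(\eta)=\frac{\|\mathbf{x}_\eta(1,\eta)\|}{\det\mathbf{J}(1,\eta)}$, $K_{yBC}(\eta)=-\frac{\mathbf{x}_\xi(1,\eta)\cdot\mathbf{x}_\eta(1,\eta)}{\|\mathbf{x}_\eta(1,\eta)\|\det\mathbf{J}(1,\eta)}$, $S_{BC}=K_{yBC}/K_{xBC}$, $W_{BC}=1/K_{xBC}$, $T_{rBC}(\eta)=u_{rBC}(\mathbf{x}(1,\eta))W_{BC}(\eta)$. Flags: $\lambda_B=0$ if $\mathbf{x}_\xi(1,-1)\cdot\mathbf{x}_\eta(1,-1)=0$, else $1$; $\lambda_C=0$ if $\mathbf{x}_\xi(1,1)\cdot\mathbf{x}_\eta(1,1)=0$,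 else $1$. When $\lambda_B=1$: $F^a_\eta(1,-1)=\frac{T_{rBC}(-1)-F_\xi(1,-1)-\alpha_{BC}W_{BC}(-1)F(1,-1)}{S_{BC}(-1)}$; when $\lambda_C=1$: $F^a_\eta(1,1)=\frac{T_{rBC}(1)-F_\xi(1,1)-\alpha_{BC}W_{BC}(1)F(1,1)}{S_{BC}(1)}$. Any term multiplied by a flag equal to $0$ is taken to be $0$. Polynomials: $\phi_0(t)=\tfrac12(1-t)$, $\phi_1(t)=\tfrac12(1+t)$; $\varphi_0=\phi_0^2(1+2\phi_1)$, $\varphi_1=\phi_1^2(1+2\phi_0)$, $\psi_0=2\phi_0^2\phi_1$, $\psi_1=-2\phi_0\phi_1^2$. $Pg(\xi,\eta)=g(-1,\eta)\varphi_0(\xi)+g_\xi(1,\eta)\psi_1(\xi)+g(\xi,-1)\varphi_0(\eta)+g(\xi,1)\varphi_1(\eta)-[g(-1,-1)\varphi_0(\eta)+g(-1,1)\varphi_1(\eta)]\varphi_0(\xi)-[g_\xi(1,-1)\varphi_0(\eta)+g_\xi(1,1)\varphi_1(\eta)]\psi_1(\xi)+[\lambda_Bg_\eta(1,-1)\psi_0(\eta)+\lambda_Cg_\eta(1,1)\psi_1(\eta)]\varphi_1(\xi)$. $F^g_\xi(1,\eta)=T_{rBC}(\eta)-S_{BC}(\eta)\{g_\eta(1,\eta)-[g(1,-1)-F(1,-1)]\varphi_0'(\eta)-[g(1,1)-F(1,1)]\varphi_1'(\eta)-\lambda_B[g_\eta(1,-1)-F^a_\eta(1,-1)]\psi_0'(\eta)-\lambda_C[g_\eta(1,1)-F^a_\eta(1,1)]\psi_1'(\eta)\}-\alpha_{BC}W_{BC}(\eta)\{g(1,\eta)-[g(1,-1)-F(1,-1)]\varphi_0(\eta)-[g(1,1)-F(1,1)]\varphi_1(\eta)-\lambda_B[g_\eta(1,-1)-F^a_\eta(1,-1)]\psi_0(\eta)-\lambda_C[g_\eta(1,1)-F^a_\eta(1,1)]\psi_1(\eta)\}$.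 $PF^g(\xi,\eta)=F(-1,\eta)\varphi_0(\xi)+F^g_\xi(1,\eta)\psi_1(\xi)+F(\xi,-1)\varphi_0(\eta)+F(\xi,1)\varphi_1(\eta)-[F(-1,-1)\varphi_0(\eta)+F(-1,1)\varphi_1(\eta)]\varphi_0(\xi)-[F_\xi(1,-1)\varphi_0(\eta)+F_\xi(1,1)\varphi_1(\eta)]\psi_1(\xi)+[\lambda_BF^a_\eta(1,-1)\psi_0(\eta)+\lambda_CF^a_\eta(1,1)\psi_1(\eta)]\varphi_1(\xi)$. *)

theory Defs
  imports "HOL-Analysis.Analysis"
begin

definition phi0 :: "real \<Rightarrow> real" where "phi0 t = (1 - t) / 2"
definition phi1 :: "real \<Rightarrow> real" where "phi1 t = (1 + t) / 2"
definition vphi0 :: "real \<Rightarrow> real" where "vphi0 t = (phi0 t)^2 * (1 + 2 * phi1 t)"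
definition vphi1 :: "real \<Rightarrow> real" where "vphi1 t = (phi1 t)^2 * (1 + 2 * phi0 t)"
definition psi0 :: "real \<Rightarrow> real" where "psi0 t = 2 * (phi0 t)^2 * phi1 t"
definition psi1 :: "real \<Rightarrow> real" where "psi1 t = - 2 * phi0 t * (phi1 t)^2"

text \<open>Geometry of the edge BC (xi = 1). The map is xm :: real => real => real*real,
  with partial derivatives xxi (w.r.t. xi) and xeta (w.r.t. eta).\<close>
definition detJ :: "(real \<Rightarrow> real \<Rightarrow> real \<times> real) \<Rightarrow> (real \<Rightarrow> real \<Rightarrow> real \<times> real) \<Rightarrow> real \<Rightarrow> real \<Rightarrow> real"
  where "detJ xxi xeta \<xi> \<eta> = fst (xxi \<xi> \<eta>) * snd (xeta \<xi> \<eta>) - fst (xeta \<xi> \<eta>) * snd (xxi \<xi> \<eta>)"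

definition KxBC :: "(real \<Rightarrow> real \<Rightarrow> real \<times> real) \<Rightarrow> (real \<Rightarrow> real \<Rightarrow> real \<times> real) \<Rightarrow> real \<Rightarrow> real"
  where "KxBC xxi xeta \<eta> = norm (xeta 1 \<eta>) / detJ xxi xeta 1 \<eta>"

definition KyBC :: "(real \<Rightarrow> real \<Rightarrow> real \<times> real) \<Rightarrow> (real \<Rightarrow> real \<Rightarrow> real \<times> real) \<Rightarrow> real \<Rightarrow> real"
  where "KyBC xxi xeta \<eta> = - (xxi 1 \<eta> \<bullet> xeta 1 \<eta>) / (norm (xeta 1 \<eta>) * detJ xxi xeta 1 \<eta>)"

definition SBC :: "(real \<Rightarrow> real \<Rightarrow> real \<times> real) \<Rightarrow> (real \<Rightarrow> real \<Rightarrow> real \<times> real) \<Rightarrow> real \<Rightarrow> real"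
  where "SBC xxi xeta \<eta> = KyBC xxi xeta \<eta> / KxBC xxi xeta \<eta>"

definition WBC :: "(real \<Rightarrow> real \<Rightarrow> real \<times> real) \<Rightarrow> (real \<Rightarrow> real \<Rightarrow> real \<times> real) \<Rightarrow> real \<Rightarrow> real"
  where "WBC xxi xeta \<eta> = 1 / KxBC xxi xeta \<eta>"

definition TrBC :: "(real \<Rightarrow> real \<Rightarrow> real \<times> real) \<Rightarrow> (real \<times> real \<Rightarrow> real) \<Rightarrow>
    (real \<Rightarrow> real \<Rightarrow> real \<times> real) \<Rightarrow> (real \<Rightarrow> real \<Rightarrow> real \<times> real) \<Rightarrow> real \<Rightarrow> real"
  where "TrBC xm urBC xxi xeta \<eta> = urBC (xm 1 \<eta>) * WBC xxi xeta \<eta>"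

definition lamB :: "(real \<Rightarrow> real \<Rightarrow> real \<times> real) \<Rightarrow> (real \<Rightarrow> real \<Rightarrow> real \<times> real) \<Rightarrow> real"
  where "lamB xxi xeta = (if xxi 1 (-1) \<bullet> xeta 1 (-1) = 0 then 0 else 1)"

definition lamC :: "(real \<Rightarrow> real \<Rightarrow> real \<times> real) \<Rightarrow> (real \<Rightarrow> real \<Rightarrow> real \<times> real) \<Rightarrow> real"
  where "lamC xxi xeta = (if xxi 1 1 \<bullet> xeta 1 1 = 0 then 0 else 1)"

text \<open>F^a_eta at a corner: (T - F_xi - alpha W F) / S (only used multiplied by the flag).\<close>
definition FaEta :: "real \<Rightarrow> real \<Rightarrow> real \<Rightarrow> real \<Rightarrow> real \<Rightarrow> real \<Rightarrow> real"
  where "FaEta T S W alpha dF Fv = (T - dF - alpha * W * Fv) / S"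

definition Pop :: "(real \<Rightarrow> real \<Rightarrow> real) \<Rightarrow> (real \<Rightarrow> real \<Rightarrow> real) \<Rightarrow> (real \<Rightarrow> real \<Rightarrow> real)
    \<Rightarrow> real \<Rightarrow> real \<Rightarrow> real \<Rightarrow> real \<Rightarrow> real"
  where "Pop g gxi geta lB lC \<xi> \<eta> =
     g (-1) \<eta> * vphi0 \<xi> + gxi 1 \<eta> * psi1 \<xi> + g \<xi> (-1) * vphi0 \<eta> + g \<xi> 1 * vphi1 \<eta>
     - (g (-1) (-1) * vphi0 \<eta> + g (-1) 1 * vphi1 \<eta>) * vphi0 \<xi>
     - (gxi 1 (-1) * vphi0 \<eta> + gxi 1 1 * vphi1 \<eta>) * psi1 \<xi>
     + (lB * geta 1 (-1) * psi0 \<eta> + lC * geta 1 1 * psi1 \<eta>) * vphi1 \<xi>"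

text \<open>F^g_xi(1,eta). FB = F(1,-1), FC = F(1,1), FaB = F^a_eta(1,-1), FaC = F^a_eta(1,1).\<close>
definition Fgxi :: "(real \<Rightarrow> real) \<Rightarrow> (real \<Rightarrow> real) \<Rightarrow> (real \<Rightarrow> real) \<Rightarrow> real \<Rightarrow> real \<Rightarrow> real
    \<Rightarrow> (real \<Rightarrow> real \<Rightarrow> real) \<Rightarrow> (real \<Rightarrow> real \<Rightarrow> real) \<Rightarrow> real \<Rightarrow> real \<Rightarrow> real \<Rightarrow> real \<Rightarrow> real \<Rightarrow> real"
  where "Fgxi S W T alpha lB lC g geta FB FC FaB FaC \<eta> =
     T \<eta>
     - S \<eta> * (geta 1 \<eta> - (g 1 (-1) - FB) * deriv vphi0 \<eta> - (g 1 1 - FC) * deriv vphi1 \<eta>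
               - lB * (geta 1 (-1) - FaB) * deriv psi0 \<eta> - lC * (geta 1 1 - FaC) * deriv psi1 \<eta>)
     - alpha * W \<eta> * (g 1 \<eta> - (g 1 (-1) - FB) * vphi0 \<eta> - (g 1 1 - FC) * vphi1 \<eta>
               - lB * (geta 1 (-1) - FaB) * psi0 \<eta> - lC * (geta 1 1 - FaC) * psi1 \<eta>)"

text \<open>PF^g. Fl = F(-1,.), Fb = F(.,-1), Ft = F(.,1), Fgx = F^g_xi(1,.),
  dFB = F_xi(1,-1), dFC = F_xi(1,1).\<close>
definition PFop :: "(real \<Rightarrow> real) \<Rightarrow> (real \<Rightarrow> real) \<Rightarrow> (real \<Rightarrow> real) \<Rightarrow> (real \<Rightarrow> real)
    \<Rightarrow> real \<Rightarrow> real \<Rightarrow> real \<Rightarrow> real \<Rightarrow> real \<Rightarrow> real \<Rightarrow> real \<Rightarrow> real \<Rightarrow> real"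
  where "PFop Fl Fb Ft Fgx dFB dFC lB lC FaB FaC \<xi> \<eta> =
     Fl \<eta> * vphi0 \<xi> + Fgx \<eta> * psi1 \<xi> + Fb \<xi> * vphi0 \<eta> + Ft \<xi> * vphi1 \<eta>
     - (Fl (-1) * vphi0 \<eta> + Fl 1 * vphi1 \<eta>) * vphi0 \<xi>
     - (dFB * vphi0 \<eta> + dFC * vphi1 \<eta>) * psi1 \<xi>
     + (lB * FaB * psi0 \<eta> + lC * FaC * psi1 \<eta>) * vphi1 \<xi>"

end

theory Submission
  imports Defs
begin

text \<open>
  The polynomials vphi0, vphi1, psi0, psi1 are the cubic Hermite basis on [-1,1]. Hence Pg
  reproduces g on the three Dirichlet edges and g_xi on the edge xi = 1, so g - Pg vanishes there,
  while PF^g carries the Dirichlet data F and has xi-derivative F^g_xi(1,.) on xi = 1.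
  On that edge V(1,.) is g(1,.) corrected by Hermite terms, and F^g_xi is by construction
  T_rBC - S_BC d/deta V(1,.) - alpha W_BC V(1,.), so the Robin condition holds.
  What remains is consistency at the corners B and C, i.e. F^g_xi(1,+-1) = F_xi(1,+-1).
  Since S_BC = -(x_xi . x_eta) / |x_eta|^2, either S_BC vanishes at the corner (lambda = 0)
  and this is the compatibility hypothesis, or F^a_eta was chosen to solve the Robin
  condition at the corner (lambda = 1).
\<close>

lemma hermite_basis_values [simp]:
  "vphi0 (-1) = 1" "vphi0 1 = 0" "vphi1 (-1) = 0" "vphi1 1 = 1"
  "psi0 (-1) = 0" "psi0 1 = 0" "psi1 (-1) = 0" "psi1 1 = 0"
  by (simp_all add: vphi0_def vphi1_def psi0_def psi1_def phi0_def phi1_def)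

lemma deriv_vphi0: "deriv vphi0 t = - 3 * (1 - t^2) / 4"
  unfolding vphi0_def[abs_def] phi0_def phi1_def
  by (rule DERIV_imp_deriv) (auto intro!: derivative_eq_intros simp: field_simps power2_eq_square)

lemma deriv_vphi1: "deriv vphi1 t = 3 * (1 - t^2) / 4"
  unfolding vphi1_def[abs_def] phi0_def phi1_def
  by (rule DERIV_imp_deriv) (auto intro!: derivative_eq_intros simp: field_simps power2_eq_square)

lemma deriv_psi0: "deriv psi0 t = (1 - t) * (- 1 - 3 * t) / 4"
  unfolding psi0_def[abs_def] phi0_def phi1_def
  by (rule DERIV_imp_deriv) (auto intro!: derivative_eq_intros simp: field_simps power2_eq_square)

lemma deriv_psi1: "deriv psi1 t = - (1 + t) * (1 - 3 * t) / 4"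
  unfolding psi1_def[abs_def] phi0_def phi1_def
  by (rule DERIV_imp_deriv) (auto intro!: derivative_eq_intros simp: field_simps power2_eq_square)

lemma hermite_basis_derivs [simp]:
  "deriv vphi0 (-1) = 0" "deriv vphi0 1 = 0" "deriv vphi1 (-1) = 0" "deriv vphi1 1 = 0"
  "deriv psi0 (-1) = 1" "deriv psi0 1 = 0" "deriv psi1 (-1) = 0" "deriv psi1 1 = 1"
  by (simp_all add: deriv_vphi0 deriv_vphi1 deriv_psi0 deriv_psi1)

lemma hermite_basis_has_real_derivative [derivative_intros]:
  "(vphi0 has_real_derivative deriv vphi0 t) (at t within s)"
  "(vphi1 has_real_derivative deriv vphi1 t) (at t within s)"
  "(psi0 has_real_derivative deriv psi0 t) (at t within s)"
  "(psi1 has_real_derivative deriv psi1 t) (at t within s)"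
  unfolding deriv_vphi0 deriv_vphi1 deriv_psi0 deriv_psi1
  unfolding vphi0_def[abs_def] vphi1_def[abs_def] psi0_def[abs_def] psi1_def[abs_def] phi0_def phi1_def
  by (auto intro!: derivative_eq_intros simp: field_simps power2_eq_square)

lemma Pop_on_edges:
  "Pop g gxi geta lB lC \<xi> (-1) = g \<xi> (-1)"
  "Pop g gxi geta lB lC \<xi> 1 = g \<xi> 1"
  "Pop g gxi geta lB lC (-1) \<eta> = g (-1) \<eta>"
  "Pop g gxi geta lB lC 1 \<eta> =
     g 1 (-1) * vphi0 \<eta> + g 1 1 * vphi1 \<eta> + lB * geta 1 (-1) * psi0 \<eta> + lC * geta 1 1 * psi1 \<eta>"
  by (simp_all add: Pop_def algebra_simps)

lemma PFop_on_edges: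
  "Fgx (-1) = dFB \<Longrightarrow> PFop Fl Fb Ft Fgx dFB dFC lB lC FaB FaC \<xi> (-1) = Fb \<xi>"
  "Fgx 1 = dFC \<Longrightarrow> PFop Fl Fb Ft Fgx dFB dFC lB lC FaB FaC \<xi> 1 = Ft \<xi>"
  "Fl (-1) = Fb (-1) \<Longrightarrow> Fl 1 = Ft (-1) \<Longrightarrow> PFop Fl Fb Ft Fgx dFB dFC lB lC FaB FaC (-1) \<eta> = Fl \<eta>"
  "PFop Fl Fb Ft Fgx dFB dFC lB lC FaB FaC 1 \<eta> =
     Fb 1 * vphi0 \<eta> + Ft 1 * vphi1 \<eta> + lB * FaB * psi0 \<eta> + lC * FaC * psi1 \<eta>"
  by (simp_all add: PFop_def algebra_simps)

lemma Pop_has_xi_derivative_at_1: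
  assumes "((\<lambda>t. g t \<eta>) has_real_derivative gxi 1 \<eta>) (at 1 within s)"
    and "((\<lambda>t. g t (-1)) has_real_derivative gxi 1 (-1)) (at 1 within s)"
    and "((\<lambda>t. g t 1) has_real_derivative gxi 1 1) (at 1 within s)"
  shows "((\<lambda>\<xi>. Pop g gxi geta lB lC \<xi> \<eta>) has_real_derivative gxi 1 \<eta>) (at 1 within s)"
  unfolding Pop_def by (auto intro!: derivative_eq_intros assms)

lemma PFop_has_xi_derivative_at_1:
  assumes "(Fb has_real_derivative dFB) (at 1 within s)"
    and "(Ft has_real_derivative dFC) (at 1 within s)"
  shows "((\<lambda>\<xi>. PFop Fl Fb Ft Fgx dFB dFC lB lC FaB FaC \<xi> \<eta>) has_real_derivative Fgx \<eta>) (at 1 within s)"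
  unfolding PFop_def by (auto intro!: derivative_eq_intros assms)

lemma Fgxi_at_corners:
  "Fgxi S W T alpha lB lC g geta FB FC FaB FaC (-1) =
     T (-1) - S (-1) * (geta 1 (-1) - lB * (geta 1 (-1) - FaB)) - alpha * W (-1) * FB"
  "Fgxi S W T alpha lB lC g geta FB FC FaB FaC 1 =
     T 1 - S 1 * (geta 1 1 - lC * (geta 1 1 - FaC)) - alpha * W 1 * FC"
  by (simp_all add: Fgxi_def algebra_simps)

lemma corner_flux_compatible:
  assumes "l = 0 \<and> S = 0 \<and> dF + alpha * W * F - T = 0 \<or> l = 1 \<and> S \<noteq> 0"
  shows "T - S * (ge - l * (ge - FaEta T S W alpha dF F)) - alpha * W * F = dF"
  using assms by (auto simp: FaEta_def field_simps)

lemma SBC_eq: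
  assumes "detJ xxi xeta 1 \<eta> \<noteq> 0"
  shows "SBC xxi xeta \<eta> = - (xxi 1 \<eta> \<bullet> xeta 1 \<eta>) / (norm (xeta 1 \<eta>))\<^sup>2"
proof -
  have "xeta 1 \<eta> \<noteq> 0"
    using assms by (auto simp: detJ_def)
  then show ?thesis
    using assms by (simp add: SBC_def KxBC_def KyBC_def field_simps power2_eq_square)
qed

lemma lamB_cases:
  assumes "detJ xxi xeta 1 (-1) \<noteq> 0"
  shows "lamB xxi xeta = 0 \<and> SBC xxi xeta (-1) = 0 \<or> lamB xxi xeta = 1 \<and> SBC xxi xeta (-1) \<noteq> 0"
  using assms by (auto simp: lamB_def SBC_eq)

lemma lamC_cases:
  assumes "detJ xxi xeta 1 1 \<noteq> 0"
  shows "lamC xxi xeta = 0 \<and> SBC xxi xeta 1 = 0 \<or> lamC xxi xeta = 1 \<and> SBC xxi xeta 1 \<noteq> 0"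
  using assms by (auto simp: lamC_def SBC_eq)

lemma robin_interpolant_boundary_conditions:
  fixes S W T :: "real \<Rightarrow> real" and lB lC alpha dFb dFt :: real
  assumes g_xi: "\<forall>\<eta>\<in>{-1..1}. ((\<lambda>t. g t \<eta>) has_real_derivative gxi 1 \<eta>) (at 1 within {-1..1})"
    and g_eta: "\<forall>\<eta>\<in>{-1..1}. ((\<lambda>t. g 1 t) has_real_derivative geta 1 \<eta>) (at \<eta> within {-1..1})"
    and dFb: "(Fb has_real_derivative dFb) (at 1 within {-1..1})"
    and dFt: "(Ft has_real_derivative dFt) (at 1 within {-1..1})"
    and cornerA: "Fl (-1) = Fb (-1)"
    and cornerD: "Fl 1 = Ft (-1)"
    and flagB: "lB = 0 \<and> S (-1) = 0 \<and> dFb + alpha * W (-1) * Fb 1 - T (-1) = 0 \<or> lB = 1 \<and> S (-1) \<noteq> 0"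
    and flagC: "lC = 0 \<and> S 1 = 0 \<and> dFt + alpha * W 1 * Ft 1 - T 1 = 0 \<or> lC = 1 \<and> S 1 \<noteq> 0"
  defines "FaB \<equiv> FaEta (T (-1)) (S (-1)) (W (-1)) alpha dFb (Fb 1)"
    and "FaC \<equiv> FaEta (T 1) (S 1) (W 1) alpha dFt (Ft 1)"
  defines "Fg \<equiv> Fgxi S W T alpha lB lC g geta (Fb 1) (Ft 1) FaB FaC"
  defines "V \<equiv> \<lambda>\<xi> \<eta>. g \<xi> \<eta> - Pop g gxi geta lB lC \<xi> \<eta> + PFop Fl Fb Ft Fg dFb dFt lB lC FaB FaC \<xi> \<eta>"
  shows "(\<forall>\<xi>\<in>{-1..1}. V \<xi> (-1) = Fb \<xi> \<and> V \<xi> 1 = Ft \<xi>)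
       \<and> (\<forall>\<eta>\<in>{-1..1}. V (-1) \<eta> = Fl \<eta>)
       \<and> (\<forall>\<eta>\<in>{-1..1}. \<exists>Vxi Veta.
            ((\<lambda>t. V t \<eta>) has_real_derivative Vxi) (at 1 within {-1..1})
          \<and> ((\<lambda>t. V 1 t) has_real_derivative Veta) (at \<eta> within {-1..1})
          \<and> Vxi + S \<eta> * Veta + alpha * W \<eta> * V 1 \<eta> = T \<eta>)"
proof (intro conjI ballI)
  have "Fg (-1) = dFb" "Fg 1 = dFt"
    using corner_flux_compatible[OF flagB] corner_flux_compatible[OF flagC]
    by (simp_all add: Fg_def Fgxi_at_corners FaB_def FaC_def)
  then show "V \<xi> (-1) = Fb \<xi>" "V \<xi> 1 = Ft \<xi>" for \<xi>
    by (simp_all add: V_def Pop_on_edges PFop_on_edges)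
  show "V (-1) \<eta> = Fl \<eta>" for \<eta>
    by (simp add: V_def Pop_on_edges PFop_on_edges cornerA cornerD)
next
  fix \<eta> :: real
  assume \<eta>: "\<eta> \<in> {-1..1}"
  define Veta where "Veta = geta 1 \<eta> - (g 1 (-1) - Fb 1) * deriv vphi0 \<eta> - (g 1 1 - Ft 1) * deriv vphi1 \<eta>
    - lB * (geta 1 (-1) - FaB) * deriv psi0 \<eta> - lC * (geta 1 1 - FaC) * deriv psi1 \<eta>"
  have V_at_1: "V 1 = (\<lambda>t. g 1 t - (g 1 (-1) - Fb 1) * vphi0 t - (g 1 1 - Ft 1) * vphi1 t
    - lB * (geta 1 (-1) - FaB) * psi0 t - lC * (geta 1 1 - FaC) * psi1 t)"
    by (auto simp: V_def Pop_on_edges PFop_on_edges algebra_simps)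
  have "((\<lambda>t. V t \<eta>) has_real_derivative Fg \<eta>) (at 1 within {-1..1})"
    unfolding V_def using \<eta> g_xi
    by (auto intro!: derivative_eq_intros Pop_has_xi_derivative_at_1 PFop_has_xi_derivative_at_1 dFb dFt)
  moreover have "((\<lambda>t. V 1 t) has_real_derivative Veta) (at \<eta> within {-1..1})"
    unfolding V_at_1 Veta_def using \<eta> g_eta by (auto intro!: derivative_eq_intros)
  moreover have "Fg \<eta> + S \<eta> * Veta + alpha * W \<eta> * V 1 \<eta> = T \<eta>"
    by (simp add: V_at_1 Veta_def Fg_def Fgxi_def algebra_simps)
  ultimately show "\<exists>Vxi Veta. ((\<lambda>t. V t \<eta>) has_real_derivative Vxi) (at 1 within {-1..1})
          \<and> ((\<lambda>t. V 1 t) has_real_derivative Veta) (at \<eta> within {-1..1})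
          \<and> Vxi + S \<eta> * Veta + alpha * W \<eta> * V 1 \<eta> = T \<eta>"
    by auto
qed

theorem mainTheorem3:
  fixes xm xxi xeta :: "real \<Rightarrow> real \<Rightarrow> real \<times> real"
    and Fl Fb Ft :: "real \<Rightarrow> real" and dFb dFt :: real
    and alpha :: real and urBC :: "real \<times> real \<Rightarrow> real"
    and g gxi geta :: "real \<Rightarrow> real \<Rightarrow> real"
  assumes xm_xi: "\<forall>\<xi>\<in>{-1..1}. \<forall>\<eta>\<in>{-1..1}.
             ((\<lambda>t. xm t \<eta>) has_vector_derivative xxi \<xi> \<eta>) (at \<xi> within {-1..1})"
    and xm_eta: "\<forall>\<xi>\<in>{-1..1}. \<forall>\<eta>\<in>{-1..1}.
             ((\<lambda>t. xm \<xi> t) has_vector_derivative xeta \<xi> \<eta>) (at \<eta> within {-1..1})"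
    and xxi_cont: "continuous_on ({-1..1} \<times> {-1..1}) (\<lambda>p. xxi (fst p) (snd p))"
    and xeta_cont: "continuous_on ({-1..1} \<times> {-1..1}) (\<lambda>p. xeta (fst p) (snd p))"
    and nonsing: "\<forall>\<eta>\<in>{-1..1}. detJ xxi xeta 1 \<eta> \<noteq> 0"
    and Fl_diff: "\<forall>t\<in>{-1..1}. Fl differentiable (at t within {-1..1})"
    and Fb_diff: "\<forall>t\<in>{-1..1}. Fb differentiable (at t within {-1..1})"
    and Ft_diff: "\<forall>t\<in>{-1..1}. Ft differentiable (at t within {-1..1})"
    and dFb: "(Fb has_real_derivative dFb) (at 1 within {-1..1})"
    and dFt: "(Ft has_real_derivative dFt) (at 1 within {-1..1})"
    and cornerA: "Fl (-1) = Fb (-1)"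
    and cornerD: "Fl 1 = Ft (-1)"
    and compatB: "lamB xxi xeta = 0 \<Longrightarrow>
       dFb + alpha * WBC xxi xeta (-1) * Fb 1 - TrBC xm urBC xxi xeta (-1) = 0"
    and compatC: "lamC xxi xeta = 0 \<Longrightarrow>
       dFt + alpha * WBC xxi xeta 1 * Ft 1 - TrBC xm urBC xxi xeta 1 = 0"
    and g_xi: "\<forall>\<xi>\<in>{-1..1}. \<forall>\<eta>\<in>{-1..1}.
             ((\<lambda>t. g t \<eta>) has_real_derivative gxi \<xi> \<eta>) (at \<xi> within {-1..1})"
    and g_eta: "\<forall>\<xi>\<in>{-1..1}. \<forall>\<eta>\<in>{-1..1}.
             ((\<lambda>t. g \<xi> t) has_real_derivative geta \<xi> \<eta>) (at \<eta> within {-1..1})"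
  defines "V \<equiv>
       (let FaB = FaEta (TrBC xm urBC xxi xeta (-1)) (SBC xxi xeta (-1)) (WBC xxi xeta (-1)) alpha dFb (Fb 1);
            FaC = FaEta (TrBC xm urBC xxi xeta 1) (SBC xxi xeta 1) (WBC xxi xeta 1) alpha dFt (Ft 1)
        in (\<lambda>\<xi> \<eta>. g \<xi> \<eta> - Pop g gxi geta (lamB xxi xeta) (lamC xxi xeta) \<xi> \<eta>
              + PFop Fl Fb Ft
                  (Fgxi (SBC xxi xeta) (WBC xxi xeta) (TrBC xm urBC xxi xeta) alpha
                        (lamB xxi xeta) (lamC xxi xeta) g geta (Fb 1) (Ft 1) FaB FaC)
                  dFb dFt (lamB xxi xeta) (lamC xxi xeta) FaB FaC \<xi> \<eta>))"
  shows "(\<forall>\<xi>\<in>{-1..1}. V \<xi> (-1) = Fb \<xi> \<and> V \<xi> 1 = Ft \<xi>)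
       \<and> (\<forall>\<eta>\<in>{-1..1}. V (-1) \<eta> = Fl \<eta>)
       \<and> (\<forall>\<eta>\<in>{-1..1}. \<exists>Vxi Veta.
            ((\<lambda>t. V t \<eta>) has_real_derivative Vxi) (at 1 within {-1..1})
          \<and> ((\<lambda>t. V 1 t) has_real_derivative Veta) (at \<eta> within {-1..1})
          \<and> Vxi + SBC xxi xeta \<eta> * Veta + alpha * WBC xxi xeta \<eta> * V 1 \<eta>
              = TrBC xm urBC xxi xeta \<eta>)"
proof -
  have g_xi_1: "\<forall>\<eta>\<in>{-1..1}. ((\<lambda>t. g t \<eta>) has_real_derivative gxi 1 \<eta>) (at 1 within {-1..1})"
    and g_eta_1: "\<forall>\<eta>\<in>{-1..1}. ((\<lambda>t. g 1 t) has_real_derivative geta 1 \<eta>) (at \<eta> within {-1..1})"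
    using g_xi g_eta by auto
  have "detJ xxi xeta 1 (-1) \<noteq> 0" "detJ xxi xeta 1 1 \<noteq> 0"
    using nonsing by auto
  then have flagB:
    "lamB xxi xeta = 0 \<and> SBC xxi xeta (-1) = 0 \<and>
       dFb + alpha * WBC xxi xeta (-1) * Fb 1 - TrBC xm urBC xxi xeta (-1) = 0
     \<or> lamB xxi xeta = 1 \<and> SBC xxi xeta (-1) \<noteq> 0"
    and flagC:
    "lamC xxi xeta = 0 \<and> SBC xxi xeta 1 = 0 \<and>
       dFt + alpha * WBC xxi xeta 1 * Ft 1 - TrBC xm urBC xxi xeta 1 = 0
     \<or> lamC xxi xeta = 1 \<and> SBC xxi xeta 1 \<noteq> 0"
    using lamB_cases lamC_cases compatB compatC by blast+
  show ?thesis
    unfolding V_def Let_def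
    by (rule robin_interpolant_boundary_conditions)
      (fact g_xi_1 g_eta_1 dFb dFt cornerA cornerD flagB flagC)+
qed

end
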